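(* Let $\{X_t\}_{t\in\mathbb N^+}$ be a real-valued process adapted to a filtration $\{\mathcal F_t\}_{t\in\mathbb N}$ with $\mathcal F_0$ trivial, such that for all $t\in\mathbb N^+$, $\mathbb E[X_t\mid\mathcal F_{t-1}]=\mu$ (a constant) and $\mathbb E[(X_t-\mu)^2\mid\mathcal F_{t-1}]\le\sigma^2$. Let $\alpha\in(0,1)$, let $\phi$ be a Catoni-type influence function, and let $\{\lambda_t\}_{t\in\mathbb N^+}$ be nonrandom positive numbers. Define $$\mathrm{CI}^{\mathsf C}_t=\left\{m\in\mathbb R:\ -\frac{\sigma^2\sum_{i=1}^t\lambda_i^2}{2}-\log(2/\alpha)\le\sum_{i=1}^t\phi(\lambda_i(X_i-m))\le\frac{\sigma^2\sum_{i=1}^t\lambda_i^2}{2}+\log(2/\alpha)\right\},$$ and let $|\mathrm{CI}^{\mathsf C}_t|$ denote its width (supremum minus infimum). Let $0<\varepsilon<1$ and $t\in\mathbb N^+$ be such that $$\left(\sum_{i=1}^t\lambda_i\right)^2-2\left(\sum_{i=1}^t\lambda_i^2\right)\left(\sigma^2\sum_{i=1}^t\lambda_i^2+\log(2/\varepsilon)+\log(2/\alpha)\right)\ge0.$$ Then, with probability at least $1-\varepsilon$, $$|\mathrm{CI}^{\mathsf C}_t|\le\frac{4\left(\sigma^2\sum_{i=1}^t\lambda_i^2+\log(2/\varepsilon)+\log(2/\alpha)\right)}{\sum_{i=1}^t\lambda_i}.$$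
   Context: A function $\phi:\mathbb R\to\mathbb R$ is a Catoni-type influence function if it is increasing and $-\log(1-x+x^2/2)\le\phi(x)\le\log(1+x+x^2/2)$ for all $x\in\mathbb R$. *)

theory Defs
  imports "HOL-Probability.Probability"
begin

definition catoni_type :: "(real \<Rightarrow> real) \<Rightarrow> bool" where
  "catoni_type \<phi> \<longleftrightarrow> mono \<phi> \<and>
     (\<forall>x. - ln (1 - x + x\<^sup>2 / 2) \<le> \<phi> x \<and> \<phi> x \<le> ln (1 + x + x\<^sup>2 / 2))"

definition catoni_CI ::
  "(real \<Rightarrow> real) \<Rightarrow> (nat \<Rightarrow> real) \<Rightarrow> real \<Rightarrow> real \<Rightarrow> (nat \<Rightarrow> 'a \<Rightarrow> real) \<Rightarrow> nat \<Rightarrow> 'a \<Rightarrow> real set"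
  where
  "catoni_CI \<phi> lam \<sigma> \<alpha> X t \<omega> =
     {m. - (\<sigma>\<^sup>2 * (\<Sum>i=1..t. (lam i)\<^sup>2)) / 2 - ln (2 / \<alpha>)
            \<le> (\<Sum>i=1..t. \<phi> (lam i * (X i \<omega> - m))) \<and>
         (\<Sum>i=1..t. \<phi> (lam i * (X i \<omega> - m)))
            \<le> (\<sigma>\<^sup>2 * (\<Sum>i=1..t. (lam i)\<^sup>2)) / 2 + ln (2 / \<alpha>)}"

definition set_width :: "real set \<Rightarrow> real" where
  "set_width S = (if S = {} then 0 else Sup S - Inf S)"

end

theory Submission
  imports Defs
begin

text \<open>For \<open>s = \<plusminus>1\<close> the Catoni bounds give \<open>exp (s \<phi> x) \<le> 1 + s x + x\<^sup>2/2\<close>. Conditioning on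
  \<open>F (n - 1)\<close>, the conditional mean and variance bounds turn this into
  \<open>E exp (s \<Sigma> \<phi> (\<lambda>\<^sub>i (X\<^sub>i - m))) \<le> exp (s (\<mu> - m) A + ((\<mu> - m)\<^sup>2 + \<sigma>\<^sup>2) B / 2)\<close> with
  \<open>A = \<Sigma> \<lambda>\<^sub>i\<close>, \<open>B = \<Sigma> \<lambda>\<^sub>i\<^sup>2\<close>, and Chernoff's inequality bounds the tails at \<open>\<epsilon>/2\<close>.
  The hypothesis on the discriminant says precisely that \<open>B \<delta>\<^sup>2/2 - A \<delta> + c = 0\<close>, where
  \<open>c = \<sigma>\<^sup>2 B + ln (2/\<epsilon>) + ln (2/\<alpha>)\<close>, has a root; for its smaller root \<open>\<delta> \<le> 2c/A\<close> the
  Chernoff thresholds at \<open>m = \<mu> \<plusminus> \<delta>\<close> coincide with the boundaries of the confidence set.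
  Off an event of probability \<open>\<epsilon>\<close>, monotonicity of \<open>\<phi>\<close> therefore confines the confidence set
  to \<open>(\<mu> - \<delta>, \<mu> + \<delta>)\<close>, whose width is \<open>2\<delta> \<le> 4c/A\<close>.\<close>

lemma borel_measurable_catoni_type:
  assumes "catoni_type \<phi>"
  shows "\<phi> \<in> borel_measurable borel"
  using assms unfolding catoni_type_def by (auto intro: borel_measurable_mono)

lemma exp_catoni_type_le:
  assumes "catoni_type \<phi>" and "s \<in> {-1, 1}"
  shows "exp (s * \<phi> x) \<le> 1 + s * x + x\<^sup>2 / 2"
proof -
  have "1 + s * x + x\<^sup>2 / 2 = ((1 + s * x)\<^sup>2 + 1) / 2"
    using assms(2) by (auto simp: power2_eq_square field_simps)
  moreover have "0 < ((1 + s * x)\<^sup>2 + 1) / 2"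
    by (simp add: add_nonneg_pos)
  ultimately have pos: "0 < 1 + s * x + x\<^sup>2 / 2"
    by simp
  have "- ln (1 - x + x\<^sup>2 / 2) \<le> \<phi> x" and "\<phi> x \<le> ln (1 + x + x\<^sup>2 / 2)"
    using assms(1) unfolding catoni_type_def by blast+
  then have "s * \<phi> x \<le> ln (1 + s * x + x\<^sup>2 / 2)"
    using assms(2) by auto
  then show ?thesis
    using pos by (simp add: ln_ge_iff)
qed

lemma catoni_sum_antimono:
  assumes "catoni_type \<phi>" and "\<forall>i\<in>I. 0 < lam i" and "m \<le> m'"
  shows "(\<Sum>i\<in>I. \<phi> (lam i * (x i - m'))) \<le> (\<Sum>i\<in>I. \<phi> (lam i * (x i - m)))"
proof (rule sum_mono)
  fix i assume "i \<in> I"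
  then have "lam i * (x i - m') \<le> lam i * (x i - m)"
    using assms(2,3) by (simp add: mult_left_mono)
  then show "\<phi> (lam i * (x i - m')) \<le> \<phi> (lam i * (x i - m))"
    using assms(1) unfolding catoni_type_def mono_def by blast
qed

lemma catoni_CI_subset:
  assumes "catoni_type \<phi>" and "\<And>i. 1 \<le> i \<Longrightarrow> 0 < lam i"
    and hi: "(\<Sum>i=1..t. \<phi> (lam i * (X i \<omega> - hi)))
              < - (\<sigma>\<^sup>2 * (\<Sum>i=1..t. (lam i)\<^sup>2)) / 2 - ln (2 / \<alpha>)"
    and lo: "(\<sigma>\<^sup>2 * (\<Sum>i=1..t. (lam i)\<^sup>2)) / 2 + ln (2 / \<alpha>)
              < (\<Sum>i=1..t. \<phi> (lam i * (X i \<omega> - lo)))"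
  shows "catoni_CI \<phi> lam \<sigma> \<alpha> X t \<omega> \<subseteq> {lo<..<hi}"
proof
  fix m assume m: "m \<in> catoni_CI \<phi> lam \<sigma> \<alpha> X t \<omega>"
  have lam: "\<forall>i\<in>{1..t}. 0 < lam i"
    using assms(2) by simp
  have "\<not> hi \<le> m"
  proof
    assume "hi \<le> m"
    then have "(\<Sum>i=1..t. \<phi> (lam i * (X i \<omega> - m))) \<le> (\<Sum>i=1..t. \<phi> (lam i * (X i \<omega> - hi)))"
      by (rule catoni_sum_antimono[OF assms(1) lam])
    with hi m show False
      unfolding catoni_CI_def by simp
  qed
  moreover have "\<not> m \<le> lo"
  proof
    assume "m \<le> lo"
    then have "(\<Sum>i=1..t. \<phi> (lam i * (X i \<omega> - lo))) \<le> (\<Sum>i=1..t. \<phi> (lam i * (X i \<omega> - m)))"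
      by (rule catoni_sum_antimono[OF assms(1) lam])
    with lo m show False
      unfolding catoni_CI_def by simp
  qed
  ultimately show "m \<in> {lo<..<hi}"
    by simp
qed

lemma set_width_le:
  fixes S :: "real set"
  assumes "S \<subseteq> {a..b}" and "a \<le> b"
  shows "set_width S \<le> b - a"
proof (cases "S = {}")
  case False
  then have "Sup S \<le> b" and "a \<le> Inf S"
    using assms(1) by (auto intro!: cSup_least cInf_greatest)
  then show ?thesis
    using False unfolding set_width_def by simp
qed (use assms(2) in \<open>simp add: set_width_def\<close>)

lemma quadratic_small_root:
  fixes A B c :: real
  assumes "0 < A" and "0 < B" and "0 \<le> c" and "2 * B * c \<le> A\<^sup>2"
  obtains \<delta> where "0 \<le> \<delta>" and "B * \<delta>\<^sup>2 / 2 - A * \<delta> + c = 0" and "\<delta> \<le> 2 * c / A"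
proof
  define r where "r = sqrt (A\<^sup>2 - 2 * B * c)"
  define \<delta> where "\<delta> = (A - r) / B"
  have r: "0 \<le> r" "r\<^sup>2 = A\<^sup>2 - 2 * B * c"
    using assms(4) unfolding r_def by simp_all
  have B\<delta>: "B * \<delta> = A - r"
    using assms(2) unfolding \<delta>_def by simp
  have \<delta>_sum: "\<delta> * (A + r) = 2 * c"
  proof -
    have "B * (\<delta> * (A + r)) = (A - r) * (A + r)"
      using B\<delta> by simp
    also have "\<dots> = B * (2 * c)"
      using r(2) by (simp add: algebra_simps power2_eq_square)
    finally have "B * (\<delta> * (A + r)) = B * (2 * c)" .
    then show ?thesis
      using assms(2) by simp
  qed
  have "0 < A + r"
    using assms(1) r(1) by simp
  then have \<delta>_eq: "\<delta> = 2 * c / (A + r)"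
    using \<delta>_sum by (simp add: field_simps)
  show "0 \<le> \<delta>"
    unfolding \<delta>_eq using \<open>0 < A + r\<close> assms(3) by simp
  show "\<delta> \<le> 2 * c / A"
    unfolding \<delta>_eq using assms(1,3) r(1) by (intro divide_left_mono) auto
  have "2 * B * (B * \<delta>\<^sup>2 / 2 - A * \<delta> + c) = (B * \<delta>)\<^sup>2 - 2 * A * (B * \<delta>) + 2 * B * c"
    by (simp add: algebra_simps power2_eq_square)
  also have "\<dots> = (A - r)\<^sup>2 - 2 * A * (A - r) + (A\<^sup>2 - r\<^sup>2)"
    using B\<delta> r(2) by simp
  also have "\<dots> = 0"
    by (simp add: algebra_simps power2_eq_square)
  finally show "B * \<delta>\<^sup>2 / 2 - A * \<delta> + c = 0"
    using assms(2) by simp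
qed

context sigma_finite_subalgebra
begin

lemma nn_cond_exp_eq_real_cond_exp:
  assumes "integrable M f" and "\<And>x. 0 \<le> f x"
  shows "AE x in M. nn_cond_exp M F (\<lambda>x. ennreal (f x)) x = ennreal (real_cond_exp M F f x)"
proof -
  have [measurable]: "f \<in> borel_measurable M"
    using assms(1) by auto
  have "(\<lambda>x. ennreal (- f x)) = (\<lambda>x. 0)"
    using assms(2) by (simp add: ennreal_neg)
  moreover have "AE x in M. 0 = nn_cond_exp M F (\<lambda>x. 0) x"
    by (rule nn_cond_exp_F_meas) auto
  ultimately have neg: "AE x in M. nn_cond_exp M F (\<lambda>x. ennreal (- f x)) x = 0"
    by auto
  have "(\<integral>\<^sup>+ x. nn_cond_exp M F (\<lambda>x. ennreal (f x)) x \<partial>M) = (\<integral>\<^sup>+ x. ennreal (f x) \<partial>M)"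
    using nn_cond_exp_intg[of "\<lambda>_. 1" "\<lambda>x. ennreal (f x)"] by simp
  also have "\<dots> < \<infinity>"
    using assms by (simp add: integrable_iff_bounded)
  finally have "AE x in M. nn_cond_exp M F (\<lambda>x. ennreal (f x)) x \<noteq> \<infinity>"
    by (intro nn_integral_PInf_AE) auto
  with neg show ?thesis
    by eventually_elim (auto simp: real_cond_exp_def less_top)
qed

end

context finite_measure_subalgebra
begin

lemma integrable_of_nn_cond_exp_le:
  assumes [measurable]: "f \<in> borel_measurable M" and "\<And>x. 0 \<le> f x"
    and "AE x in M. nn_cond_exp M F (\<lambda>x. ennreal (f x)) x \<le> ennreal c"
  shows "integrable M f"
proof (rule integrableI_nonneg)
  have "(\<integral>\<^sup>+ x. ennreal (f x) \<partial>M) = (\<integral>\<^sup>+ x. nn_cond_exp M F (\<lambda>x. ennreal (f x)) x \<partial>M)"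
    using nn_cond_exp_intg[of "\<lambda>_. 1" "\<lambda>x. ennreal (f x)"] by simp
  also have "\<dots> \<le> (\<integral>\<^sup>+ x. ennreal c \<partial>M)"
    by (rule nn_integral_mono_AE) (use assms(3) in simp)
  also have "\<dots> < \<infinity>"
    using emeasure_finite[of "space M"] by (simp add: ennreal_mult_eq_top_iff less_top[symmetric])
  finally show "(\<integral>\<^sup>+ x. ennreal (f x) \<partial>M) < \<infinity>" .
qed (use assms in auto)

text \<open>Writing \<open>Y - m = V + d\<close> with \<open>V = Y - \<mu>\<close> and \<open>d = \<mu> - m\<close>, the conditional expectation
  of the quadratic is \<open>1 + a d + a\<^sup>2 d\<^sup>2 / 2 + a\<^sup>2 E[V\<^sup>2 | F] / 2\<close>, the linear term in \<open>V\<close> vanishing.\<close>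

lemma nn_cond_exp_quadratic_le:
  assumes Y: "integrable M Y"
    and mean: "AE x in M. real_cond_exp M F Y x = \<mu>"
    and var: "AE x in M. nn_cond_exp M F (\<lambda>x. ennreal ((Y x - \<mu>)\<^sup>2)) x \<le> ennreal (\<sigma>\<^sup>2)"
  shows "AE x in M. nn_cond_exp M F (\<lambda>x. ennreal (1 + a * (Y x - m) + a\<^sup>2 * (Y x - m)\<^sup>2 / 2)) x
           \<le> ennreal (1 + a * (\<mu> - m) + a\<^sup>2 * ((\<mu> - m)\<^sup>2 + \<sigma>\<^sup>2) / 2)"
proof -
  define d where "d = \<mu> - m"
  define V where "V x = Y x - \<mu>" for x
  define c0 c1 c2 where "c0 = 1 + a * d + a\<^sup>2 * d\<^sup>2 / 2" and "c1 = a + a\<^sup>2 * d" and "c2 = a\<^sup>2 / 2"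
  have Q: "1 + a * (Y x - m) + a\<^sup>2 * (Y x - m)\<^sup>2 / 2 = c0 + c1 * V x + c2 * (V x)\<^sup>2" for x
    unfolding c0_def c1_def c2_def V_def d_def by (simp add: field_simps power2_eq_square)
  have Q_nonneg: "0 \<le> c0 + c1 * V x + c2 * (V x)\<^sup>2" for x
  proof -
    have "0 < ((1 + a * (Y x - m))\<^sup>2 + 1) / 2"
      by (simp add: add_nonneg_pos)
    also have "\<dots> = 1 + a * (Y x - m) + a\<^sup>2 * (Y x - m)\<^sup>2 / 2"
      by (simp add: field_simps power2_eq_square)
    finally show ?thesis
      unfolding Q by simp
  qed
  have [measurable]: "Y \<in> borel_measurable M"
    using Y by auto
  have V: "integrable M V"
    unfolding V_def using Y by auto
  have V2: "integrable M (\<lambda>x. (V x)\<^sup>2)"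
    by (rule integrable_of_nn_cond_exp_le[OF _ _ var[folded V_def]]) (auto simp: V_def)
  have "AE x in M. real_cond_exp M F (\<lambda>x. c0 + c1 * V x + c2 * (V x)\<^sup>2) x
          = c0 + c1 * real_cond_exp M F V x + c2 * real_cond_exp M F (\<lambda>x. (V x)\<^sup>2) x"
  proof -
    have "AE x in M. real_cond_exp M F (\<lambda>x. (c0 + c1 * V x) + c2 * (V x)\<^sup>2) x
        = real_cond_exp M F (\<lambda>x. c0 + c1 * V x) x + real_cond_exp M F (\<lambda>x. c2 * (V x)\<^sup>2) x"
      using V V2 by (intro real_cond_exp_add) auto
    moreover have "AE x in M. real_cond_exp M F (\<lambda>x. c0 + c1 * V x) x
        = real_cond_exp M F (\<lambda>x. c0) x + real_cond_exp M F (\<lambda>x. c1 * V x) x"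
      using V by (intro real_cond_exp_add) auto
    moreover have "AE x in M. real_cond_exp M F (\<lambda>x. c0) x = c0"
      by (rule real_cond_exp_F_meas) auto
    moreover have "AE x in M. real_cond_exp M F (\<lambda>x. c1 * V x) x = c1 * real_cond_exp M F V x"
      using V by (rule real_cond_exp_cmult)
    moreover have "AE x in M. real_cond_exp M F (\<lambda>x. c2 * (V x)\<^sup>2) x
        = c2 * real_cond_exp M F (\<lambda>x. (V x)\<^sup>2) x"
      using V2 by (rule real_cond_exp_cmult)
    ultimately show ?thesis
      by eventually_elim simp
  qed
  moreover have "AE x in M. real_cond_exp M F V x = 0"
  proof -
    have "AE x in M. real_cond_exp M F V x = real_cond_exp M F Y x - real_cond_exp M F (\<lambda>x. \<mu>) x"
      unfolding V_def using Y by (intro real_cond_exp_diff) auto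
    moreover have "AE x in M. real_cond_exp M F (\<lambda>x. \<mu>) x = \<mu>"
      by (rule real_cond_exp_F_meas) auto
    ultimately show ?thesis
      using mean by eventually_elim simp
  qed
  moreover have "AE x in M. nn_cond_exp M F (\<lambda>x. ennreal ((V x)\<^sup>2)) x
      = ennreal (real_cond_exp M F (\<lambda>x. (V x)\<^sup>2) x)"
    using V2 by (rule nn_cond_exp_eq_real_cond_exp) simp
  moreover have "AE x in M. nn_cond_exp M F (\<lambda>x. ennreal (c0 + c1 * V x + c2 * (V x)\<^sup>2)) x
      = ennreal (real_cond_exp M F (\<lambda>x. c0 + c1 * V x + c2 * (V x)\<^sup>2) x)"
    using V V2 Q_nonneg by (intro nn_cond_exp_eq_real_cond_exp) auto
  ultimately show ?thesis
    using var[folded V_def]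
  proof eventually_elim
    case (elim x)
    then have "real_cond_exp M F (\<lambda>x. (V x)\<^sup>2) x \<le> \<sigma>\<^sup>2"
      by simp
    then have "c0 + c2 * real_cond_exp M F (\<lambda>x. (V x)\<^sup>2) x \<le> c0 + c2 * \<sigma>\<^sup>2"
      unfolding c2_def by (simp add: mult_left_mono)
    also have "\<dots> = 1 + a * (\<mu> - m) + a\<^sup>2 * ((\<mu> - m)\<^sup>2 + \<sigma>\<^sup>2) / 2"
      unfolding c0_def c2_def d_def by (simp add: algebra_simps)
    finally show ?case
      using elim unfolding Q by (simp add: ennreal_leI)
  qed
qed

lemma nn_integral_mult_quadratic_le:
  assumes Z [measurable]: "Z \<in> borel_measurable F"
    and Y: "integrable M Y"
    and mean: "AE x in M. real_cond_exp M F Y x = \<mu>"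
    and var: "AE x in M. nn_cond_exp M F (\<lambda>x. ennreal ((Y x - \<mu>)\<^sup>2)) x \<le> ennreal (\<sigma>\<^sup>2)"
  shows "(\<integral>\<^sup>+x. Z x * ennreal (1 + a * (Y x - m) + a\<^sup>2 * (Y x - m)\<^sup>2 / 2) \<partial>M)
           \<le> ennreal (1 + a * (\<mu> - m) + a\<^sup>2 * ((\<mu> - m)\<^sup>2 + \<sigma>\<^sup>2) / 2) * (\<integral>\<^sup>+x. Z x \<partial>M)"
    (is "?lhs \<le> ennreal ?g * _")
proof -
  have [measurable]: "Y \<in> borel_measurable M"
    using Y by auto
  have "?lhs = (\<integral>\<^sup>+x. Z x * nn_cond_exp M F (\<lambda>x. ennreal (1 + a * (Y x - m) + a\<^sup>2 * (Y x - m)\<^sup>2 / 2)) x \<partial>M)"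
    by (rule nn_cond_exp_intg[symmetric]) auto
  also have "\<dots> \<le> (\<integral>\<^sup>+x. Z x * ennreal ?g \<partial>M)"
    using nn_cond_exp_quadratic_le[OF Y mean var, of a m]
    by (intro nn_integral_mono_AE) (elim AE_mp, intro AE_I2 impI mult_left_mono, auto)
  also have "\<dots> = ennreal ?g * (\<integral>\<^sup>+x. Z x \<partial>M)"
    using measurable_from_subalg[OF subalg Z]
    by (subst nn_integral_cmult[symmetric]) (auto simp: mult.commute)
  finally show ?thesis .
qed

end

locale cond_mean_variance_process = prob_space M for M :: "'a measure" +
  fixes F :: "nat \<Rightarrow> 'a measure" and X :: "nat \<Rightarrow> 'a \<Rightarrow> real" and \<mu> \<sigma> :: real
  assumes filtration_F: "filtration (space M) F"
    and subalgebra_F: "\<And>n. subalgebra M (F n)"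
    and adapted: "\<And>n. n \<ge> 1 \<Longrightarrow> X n \<in> borel_measurable (F n)"
    and integrable_X: "\<And>n. n \<ge> 1 \<Longrightarrow> integrable M (X n)"
    and cond_mean: "\<And>n. n \<ge> 1 \<Longrightarrow> AE \<omega> in M. real_cond_exp M (F (n - 1)) (X n) \<omega> = \<mu>"
    and cond_variance: "\<And>n. n \<ge> 1 \<Longrightarrow>
          AE \<omega> in M. nn_cond_exp M (F (n - 1)) (\<lambda>\<omega>. ennreal ((X n \<omega> - \<mu>)\<^sup>2)) \<omega> \<le> ennreal (\<sigma>\<^sup>2)"
begin

lemma finite_measure_subalgebra_F: "finite_measure_subalgebra M (F n)"
  by unfold_locales (rule subalgebra_F)

lemma borel_measurable_X_F:
  assumes "1 \<le> i" and "i \<le> n"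
  shows "X i \<in> borel_measurable (F n)"
proof -
  have "subalgebra (F n) (F i)"
    unfolding subalgebra_def
    using filtration.space_F[OF filtration_F] filtration.sets_F_mono[OF filtration_F \<open>i \<le> n\<close>] by auto
  then show ?thesis
    using measurable_from_subalg adapted assms(1) by blast
qed

lemma borel_measurable_catoni_sum:
  assumes "catoni_type \<phi>"
  shows "(\<lambda>\<omega>. \<Sum>i=1..n. \<phi> (lam i * (X i \<omega> - m))) \<in> borel_measurable (F n)"
proof (rule borel_measurable_sum)
  fix i assume "i \<in> {1..n}"
  then have [measurable]: "X i \<in> borel_measurable (F n)"
    by (auto intro: borel_measurable_X_F)
  note [measurable] = borel_measurable_catoni_type[OF assms]
  show "(\<lambda>\<omega>. \<phi> (lam i * (X i \<omega> - m))) \<in> borel_measurable (F n)"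
    by measurable
qed

lemma borel_measurable_catoni_sum2:
  assumes "catoni_type \<phi>"
  shows "(\<lambda>\<omega>. \<Sum>i=1..n. \<phi> (lam i * (X i \<omega> - m))) \<in> borel_measurable M"
  using measurable_from_subalg[OF subalgebra_F borel_measurable_catoni_sum[OF assms]] .

text \<open>The exponential supermartingale bound: one factor \<open>1 + k \<le> exp k\<close> per time step.\<close>

lemma nn_integral_exp_catoni_sum_le:
  assumes cat: "catoni_type \<phi>" and s: "s \<in> {-1, 1}"
  shows "(\<integral>\<^sup>+\<omega>. ennreal (exp (s * (\<Sum>i=1..n. \<phi> (lam i * (X i \<omega> - m))))) \<partial>M)
           \<le> ennreal (exp (\<Sum>i=1..n. s * lam i * (\<mu> - m) + (lam i)\<^sup>2 * ((\<mu> - m)\<^sup>2 + \<sigma>\<^sup>2) / 2))"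
proof (induction n)
  case 0
  show ?case by (simp add: emeasure_space_1)
next
  case (Suc n)
  define S where "S \<omega> = (\<Sum>i=1..n. \<phi> (lam i * (X i \<omega> - m)))" for \<omega>
  define K where "K = (\<Sum>i=1..n. s * lam i * (\<mu> - m) + (lam i)\<^sup>2 * ((\<mu> - m)\<^sup>2 + \<sigma>\<^sup>2) / 2)"
  define Y where "Y = X (Suc n)"
  define a where "a = s * lam (Suc n)"
  define k where "k = a * (\<mu> - m) + a\<^sup>2 * ((\<mu> - m)\<^sup>2 + \<sigma>\<^sup>2) / 2"
  have s2: "s\<^sup>2 = 1"
    using s by auto
  then have a2: "a\<^sup>2 = (lam (Suc n))\<^sup>2"
    unfolding a_def by (simp add: power_mult_distrib)
  have Z: "(\<lambda>\<omega>. ennreal (exp (s * S \<omega>))) \<in> borel_measurable (F n)"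
    using borel_measurable_catoni_sum[OF cat] unfolding S_def by measurable
  have "(\<integral>\<^sup>+\<omega>. ennreal (exp (s * (\<Sum>i=1..Suc n. \<phi> (lam i * (X i \<omega> - m))))) \<partial>M)
      = (\<integral>\<^sup>+\<omega>. ennreal (exp (s * S \<omega>)) * ennreal (exp (s * \<phi> (lam (Suc n) * (Y \<omega> - m)))) \<partial>M)"
    unfolding S_def Y_def by (simp add: distrib_left exp_add ennreal_mult')
  also have "\<dots> \<le> (\<integral>\<^sup>+\<omega>. ennreal (exp (s * S \<omega>)) * ennreal (1 + a * (Y \<omega> - m) + a\<^sup>2 * (Y \<omega> - m)\<^sup>2 / 2) \<partial>M)"
  proof (intro nn_integral_mono mult_left_mono ennreal_leI)
    fix \<omega>
    have "exp (s * \<phi> (lam (Suc n) * (Y \<omega> - m)))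
        \<le> 1 + s * (lam (Suc n) * (Y \<omega> - m)) + (lam (Suc n) * (Y \<omega> - m))\<^sup>2 / 2"
      by (rule exp_catoni_type_le[OF cat s])
    also have "\<dots> = 1 + a * (Y \<omega> - m) + a\<^sup>2 * (Y \<omega> - m)\<^sup>2 / 2"
      by (simp add: a_def power_mult_distrib s2)
    finally show "exp (s * \<phi> (lam (Suc n) * (Y \<omega> - m))) \<le> 1 + a * (Y \<omega> - m) + a\<^sup>2 * (Y \<omega> - m)\<^sup>2 / 2" .
  qed simp
  also have "\<dots> \<le> ennreal (1 + k) * (\<integral>\<^sup>+\<omega>. ennreal (exp (s * S \<omega>)) \<partial>M)"
    unfolding k_def add.assoc[symmetric] Y_def
    using cond_mean[of "Suc n"] cond_variance[of "Suc n"]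
    by (intro finite_measure_subalgebra.nn_integral_mult_quadratic_le[OF finite_measure_subalgebra_F Z])
       (auto intro: integrable_X)
  also have "\<dots> \<le> ennreal (exp k) * ennreal (exp K)"
    using Suc.IH unfolding S_def K_def by (intro mult_mono ennreal_leI) auto
  also have "\<dots> = ennreal (exp (\<Sum>i=1..Suc n. s * lam i * (\<mu> - m) + (lam i)\<^sup>2 * ((\<mu> - m)\<^sup>2 + \<sigma>\<^sup>2) / 2))"
    unfolding k_def K_def a2 by (simp add: a_def ennreal_mult'[symmetric] exp_add[symmetric] add_ac)
  finally show ?case .
qed

lemma prob_catoni_sum_tail_le:
  assumes cat: "catoni_type \<phi>" and s: "s \<in> {-1, 1}" and "0 < p"
  shows "prob {\<omega>\<in>space M. s * (\<mu> - m) * (\<Sum>i=1..t. lam i)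
              + ((\<mu> - m)\<^sup>2 + \<sigma>\<^sup>2) * (\<Sum>i=1..t. (lam i)\<^sup>2) / 2 - ln p
            \<le> s * (\<Sum>i=1..t. \<phi> (lam i * (X i \<omega> - m)))} \<le> p"
proof -
  define R where "R \<omega> = s * (\<Sum>i=1..t. \<phi> (lam i * (X i \<omega> - m)))" for \<omega>
  define K where "K = (\<Sum>i=1..t. s * lam i * (\<mu> - m) + (lam i)\<^sup>2 * ((\<mu> - m)\<^sup>2 + \<sigma>\<^sup>2) / 2)"
  have [measurable]: "R \<in> borel_measurable M"
    using borel_measurable_catoni_sum2[OF cat] unfolding R_def by measurable
  have "K = (\<Sum>i=1..t. s * (\<mu> - m) * lam i + ((\<mu> - m)\<^sup>2 + \<sigma>\<^sup>2) / 2 * (lam i)\<^sup>2)"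
    unfolding K_def by (intro sum.cong) (auto simp: algebra_simps)
  also have "\<dots> = s * (\<mu> - m) * (\<Sum>i=1..t. lam i) + ((\<mu> - m)\<^sup>2 + \<sigma>\<^sup>2) / 2 * (\<Sum>i=1..t. (lam i)\<^sup>2)"
    by (simp add: sum.distrib sum_distrib_left)
  finally have K: "K = s * (\<mu> - m) * (\<Sum>i=1..t. lam i) + ((\<mu> - m)\<^sup>2 + \<sigma>\<^sup>2) * (\<Sum>i=1..t. (lam i)\<^sup>2) / 2"
    by simp
  have "emeasure M {\<omega>\<in>space M. K - ln p \<le> R \<omega>}
      \<le> ennreal (exp (- 1 * (K - ln p))) * (\<integral>\<^sup>+\<omega>. ennreal (exp (1 * R \<omega>)) * indicator (space M) \<omega> \<partial>M)"
    by (rule Chernoff_ineq_nn_integral_ge) auto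
  also have "(\<integral>\<^sup>+\<omega>. ennreal (exp (1 * R \<omega>)) * indicator (space M) \<omega> \<partial>M) = (\<integral>\<^sup>+\<omega>. ennreal (exp (R \<omega>)) \<partial>M)"
    by (rule nn_integral_cong) simp
  also have "\<dots> \<le> ennreal (exp K)"
    unfolding R_def K_def by (rule nn_integral_exp_catoni_sum_le[OF cat s])
  also have "ennreal (exp (- 1 * (K - ln p))) * ennreal (exp K) = ennreal p"
    using \<open>0 < p\<close> by (simp add: ennreal_mult'[symmetric] mult_exp_exp)
  finally have "emeasure M {\<omega>\<in>space M. K - ln p \<le> R \<omega>} \<le> ennreal p"
    by (simp add: mult_left_mono)
  then show ?thesis
    using \<open>0 < p\<close> unfolding R_def K by (simp add: emeasure_eq_measure)
qed


lemma catoni_CI_subset_with_prob: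
  assumes cat: "catoni_type \<phi>" and lam: "\<And>i. 1 \<le> i \<Longrightarrow> 0 < lam i" and "0 < p"
    and root: "(\<Sum>i=1..t. (lam i)\<^sup>2) * \<delta>\<^sup>2 / 2 - (\<Sum>i=1..t. lam i) * \<delta>
                 + \<sigma>\<^sup>2 * (\<Sum>i=1..t. (lam i)\<^sup>2) - ln p + ln (2 / \<alpha>) = 0"
  obtains E where "E \<in> sets M" and "1 - 2 * p \<le> prob E"
    and "\<And>\<omega>. \<omega> \<in> E \<Longrightarrow> catoni_CI \<phi> lam \<sigma> \<alpha> X t \<omega> \<subseteq> {\<mu> - \<delta><..<\<mu> + \<delta>}"
proof
  define A B where "A = (\<Sum>i=1..t. lam i)" and "B = (\<Sum>i=1..t. (lam i)\<^sup>2)"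
  define L where "L = - (\<sigma>\<^sup>2 * B) / 2 - ln (2 / \<alpha>)"
  have "- \<delta> * A + (\<delta>\<^sup>2 + \<sigma>\<^sup>2) * B / 2 - ln p
      = (B * \<delta>\<^sup>2 / 2 - A * \<delta> + \<sigma>\<^sup>2 * B - ln p + ln (2 / \<alpha>)) + L"
    unfolding L_def by (simp add: algebra_simps)
  also have "\<dots> = L"
    using root[folded A_def B_def] by simp
  finally have threshold: "- \<delta> * A + (\<delta>\<^sup>2 + \<sigma>\<^sup>2) * B / 2 - ln p = L" .
  define above where "above = {\<omega>\<in>space M. L \<le> (\<Sum>i=1..t. \<phi> (lam i * (X i \<omega> - (\<mu> + \<delta>))))}"
  define below where "below = {\<omega>\<in>space M. L \<le> - (\<Sum>i=1..t. \<phi> (lam i * (X i \<omega> - (\<mu> - \<delta>))))}"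
  define E where "E = space M - (above \<union> below)"
  have [measurable]: "above \<in> sets M" "below \<in> sets M"
    unfolding above_def below_def
    using borel_measurable_catoni_sum2[OF cat] by measurable
  have "prob above \<le> p"
    using prob_catoni_sum_tail_le[OF cat _ \<open>0 < p\<close>, where s = 1 and m = "\<mu> + \<delta>" and t = t and lam = lam]
    unfolding above_def threshold[symmetric] A_def B_def by simp
  moreover have "prob below \<le> p"
    using prob_catoni_sum_tail_le[OF cat _ \<open>0 < p\<close>, where s = "-1" and m = "\<mu> - \<delta>" and t = t and lam = lam]
    unfolding below_def threshold[symmetric] A_def B_def by simp
  moreover have "prob E = 1 - prob (above \<union> below)"
    unfolding E_def by (simp add: prob_compl)
  moreover have "prob (above \<union> below) \<le> prob above + prob below"
    by (rule measure_Un_le) auto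
  ultimately show "1 - 2 * p \<le> prob E"
    by linarith
  show "E \<in> sets M"
    unfolding E_def by simp
  fix \<omega> assume "\<omega> \<in> E"
  then have "(\<Sum>i=1..t. \<phi> (lam i * (X i \<omega> - (\<mu> + \<delta>)))) < L"
    and "- L < (\<Sum>i=1..t. \<phi> (lam i * (X i \<omega> - (\<mu> - \<delta>))))"
    unfolding E_def above_def below_def by auto
  then show "catoni_CI \<phi> lam \<sigma> \<alpha> X t \<omega> \<subseteq> {\<mu> - \<delta><..<\<mu> + \<delta>}"
    unfolding L_def B_def by (intro catoni_CI_subset[OF cat lam]) simp_all
qed

end

theorem theorem4:
  fixes M :: "'a measure" and F :: "nat \<Rightarrow> 'a measure" and X :: "nat \<Rightarrow> 'a \<Rightarrow> real"
    and \<mu> \<sigma> \<alpha> \<epsilon> :: real and \<phi> :: "real \<Rightarrow> real" and lam :: "nat \<Rightarrow> real" and t :: nat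
  assumes "prob_space M"
    and "filtration (space M) F"
    and "\<And>n. subalgebra M (F n)"
    and "sets (F 0) = {{}, space M}"
    and "\<And>n. n \<ge> 1 \<Longrightarrow> X n \<in> borel_measurable (F n)"
    and "\<And>n. n \<ge> 1 \<Longrightarrow> integrable M (X n)"
    and "\<And>n. n \<ge> 1 \<Longrightarrow> AE \<omega> in M. real_cond_exp M (F (n - 1)) (X n) \<omega> = \<mu>"
    and "\<And>n. n \<ge> 1 \<Longrightarrow>
           AE \<omega> in M. nn_cond_exp M (F (n - 1)) (\<lambda>\<omega>. ennreal ((X n \<omega> - \<mu>)\<^sup>2)) \<omega> \<le> ennreal (\<sigma>\<^sup>2)"
    and "0 < \<alpha>" and "\<alpha> < 1"
    and "catoni_type \<phi>"
    and "\<And>n. n \<ge> 1 \<Longrightarrow> lam n > 0"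
    and "0 < \<epsilon>" and "\<epsilon> < 1"
    and "t \<ge> 1"
    and "(\<Sum>i=1..t. lam i)\<^sup>2 - 2 * (\<Sum>i=1..t. (lam i)\<^sup>2) *
           (\<sigma>\<^sup>2 * (\<Sum>i=1..t. (lam i)\<^sup>2) + ln (2 / \<epsilon>) + ln (2 / \<alpha>)) \<ge> 0"
  shows "\<exists>E \<in> sets M. measure M E \<ge> 1 - \<epsilon> \<and>
           (\<forall>\<omega> \<in> E. set_width (catoni_CI \<phi> lam \<sigma> \<alpha> X t \<omega>) \<le>
              4 * (\<sigma>\<^sup>2 * (\<Sum>i=1..t. (lam i)\<^sup>2) + ln (2 / \<epsilon>) + ln (2 / \<alpha>)) / (\<Sum>i=1..t. lam i))"
proof -
  interpret cond_mean_variance_process M F X \<mu> \<sigma>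
    using assms(1-3,5-8) by (intro cond_mean_variance_process.intro cond_mean_variance_process_axioms.intro) auto
  define A B c where "A = (\<Sum>i=1..t. lam i)" and "B = (\<Sum>i=1..t. (lam i)\<^sup>2)"
    and "c = \<sigma>\<^sup>2 * B + ln (2 / \<epsilon>) + ln (2 / \<alpha>)"
  have A: "0 < A" and B: "0 < B"
    unfolding A_def B_def using assms(12,15) by (fastforce intro!: sum_pos)+
  have "0 < ln (2 / \<epsilon>)" and "0 < ln (2 / \<alpha>)"
    using assms(9,10,13,14) by (auto intro!: ln_gt_zero simp: field_simps)
  then have c: "0 \<le> c"
    unfolding c_def using B by (intro add_nonneg_nonneg mult_nonneg_nonneg) auto
  have "2 * B * c \<le> A\<^sup>2"
    using assms(16) unfolding A_def B_def c_def by simp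
  then obtain \<delta> where \<delta>: "0 \<le> \<delta>" "B * \<delta>\<^sup>2 / 2 - A * \<delta> + c = 0" "\<delta> \<le> 2 * c / A"
    using quadratic_small_root[OF A B c] by blast
  have "ln (\<epsilon> / 2) = - ln (2 / \<epsilon>)"
    using assms(13) by (simp add: ln_div)
  then have root: "B * \<delta>\<^sup>2 / 2 - A * \<delta> + \<sigma>\<^sup>2 * B - ln (\<epsilon> / 2) + ln (2 / \<alpha>) = 0"
    using \<delta>(2) unfolding c_def by linarith
  obtain E where E: "E \<in> sets M" "1 - 2 * (\<epsilon> / 2) \<le> prob E"
    "\<And>\<omega>. \<omega> \<in> E \<Longrightarrow> catoni_CI \<phi> lam \<sigma> \<alpha> X t \<omega> \<subseteq> {\<mu> - \<delta><..<\<mu> + \<delta>}"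
    using catoni_CI_subset_with_prob[OF assms(11,12) _ root[unfolded A_def B_def]] assms(13) by auto
  show ?thesis
  proof (intro bexI conjI ballI)
    show "1 - \<epsilon> \<le> prob E"
      using E(2) by simp
    fix \<omega> assume "\<omega> \<in> E"
    then have "set_width (catoni_CI \<phi> lam \<sigma> \<alpha> X t \<omega>) \<le> (\<mu> + \<delta>) - (\<mu> - \<delta>)"
      using E(3)[of \<omega>] \<delta>(1) by (intro set_width_le) auto
    also have "\<dots> \<le> 4 * c / A"
      using \<delta>(3) by simp
    finally show "set_width (catoni_CI \<phi> lam \<sigma> \<alpha> X t \<omega>) \<le>
        4 * (\<sigma>\<^sup>2 * (\<Sum>i=1..t. (lam i)\<^sup>2) + ln (2 / \<epsilon>) + ln (2 / \<alpha>)) / (\<Sum>i=1..t. lam i)"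
      unfolding A_def B_def c_def .
  qed (rule E(1))
qed

end
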